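(* Let $(G;+)$ be a finite abelian group, $n\ge3$, and suppose that $\rho=\{(a_1,\dots,a_n)\in G^n:\ a_1+\dots+a_n=0\}$ is a key relation. Then the order of $G$ is a power of a prime number.
   Context: A unary vector-function is a tuple $\Psi=(\psi_1,\dots,\psi_n)$ of maps $\psi_i:G\to G$ acting coordinatewise; it preserves $\rho$ if $\Psi(\rho)\subseteq\rho$. $\rho\subseteq G^n$ is a key relation if there is $\beta\in G^n\setminus\rho$ (a key tuple) such that every $\alpha\in G^n\setminus\rho$ is mapped to $\beta$ by some unary vector-function preserving $\rho$. *)

theory Defs
  imports "HOL-Computational_Algebra.Primes"
begin

text \<open>n-tuples over G are lists of length n; a unary vector-function is a list
of n unary maps acting coordinatewise.\<close>

definition tuples :: "nat \<Rightarrow> 'a list set" where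
  "tuples n = {xs. length xs = n}"

definition vapply :: "('a \<Rightarrow> 'a) list \<Rightarrow> 'a list \<Rightarrow> 'a list" where
  "vapply \<Psi> xs = map2 (\<lambda>f x. f x) \<Psi> xs"

definition vpreserves :: "('a \<Rightarrow> 'a) list \<Rightarrow> 'a list set \<Rightarrow> bool" where
  "vpreserves \<Psi> \<rho> \<longleftrightarrow> (\<forall>\<alpha>\<in>\<rho>. vapply \<Psi> \<alpha> \<in> \<rho>)"

definition key_relation :: "nat \<Rightarrow> 'a list set \<Rightarrow> bool" where
  "key_relation n \<rho> \<longleftrightarrow> \<rho> \<subseteq> tuples n \<and>
     (\<exists>\<beta>\<in>tuples n - \<rho>. \<forall>\<alpha>\<in>tuples n - \<rho>.
        \<exists>\<Psi>. length \<Psi> = n \<and> vpreserves \<Psi> \<rho> \<and> vapply \<Psi> \<alpha> = \<beta>)"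

end

theory Submission
  imports Defs "HOL-Algebra.Sylow" "HOL-Algebra.Multiplicative_Group"
begin

text \<open>Let \<open>\<beta>\<close> be a key tuple. For \<open>n \<ge> 3\<close> every unary vector-function preserving the
zero-sum relation has an affine first coordinate, so the sum of the image of \<open>(s, 0, \<dots>, 0)\<close>
depends additively on \<open>s\<close>. Sending \<open>(s, 0, \<dots>, 0)\<close> to \<open>\<beta>\<close> for an element \<open>s\<close> of prime
order \<open>q\<close> (Cauchy) shows that \<open>q\<close> annihilates the nonzero element \<open>\<Sigma>\<beta>\<close>. Two distinct
primes cannot both annihilate it, so \<open>|G|\<close> has only one prime divisor.\<close>

abbreviation zero_sum_tuples :: "nat \<Rightarrow> 'a::monoid_add list set" where
  "zero_sum_tuples n \<equiv> {xs. length xs = n \<and> sum_list xs = 0}"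

primrec nsmul :: "nat \<Rightarrow> 'a::monoid_add \<Rightarrow> 'a" where
  "nsmul 0 x = 0"
| "nsmul (Suc k) x = x + nsmul k x"

lemma sum_list_replicate_zero [simp]: "sum_list (replicate k (0::'a::monoid_add)) = 0"
  by (induction k) simp_all

lemma nsmul_zero [simp]: "nsmul k (0::'a::monoid_add) = 0"
  by (induction k) simp_all

lemma nsmul_add: "nsmul (a + b) x = nsmul a x + nsmul b (x::'a::monoid_add)"
  by (induction a) (simp_all add: add.assoc)

lemma nsmul_mult: "nsmul (a * b) x = nsmul a (nsmul b (x::'a::monoid_add))"
  by (induction a) (simp_all add: nsmul_add)

lemma (in additive) nsmul: "f (nsmul k x) = nsmul k (f x)"
  by (induction k) (simp_all add: add zero)

lemma nsmul_coprime_eq_0: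
  fixes t :: "'a::monoid_add"
  assumes "coprime p q" and "nsmul p t = 0" and "nsmul q t = 0"
  shows "t = 0"
proof (cases "p = 0")
  case True
  then have "q = 1" using assms(1) by simp
  then show ?thesis using assms(3) by simp
next
  case False
  then obtain x y where "p * x = 1 + q * y"
    using bezout_nat[of p q] assms(1) by auto
  then have "nsmul (p * x) t = t + nsmul (q * y) t"
    by (simp add: nsmul_add)
  then show ?thesis
    using assms(2,3) by (simp add: nsmul_mult mult.commute[of _ x] mult.commute[of _ y])
qed

definition additive_group :: "'a::ab_group_add monoid" where
  "additive_group = \<lparr>carrier = UNIV, mult = (+), one = 0\<rparr>"

lemma group_additive_group: "group additive_group"
  by (rule groupI) (auto simp: additive_group_def add.assoc intro: exI[of _ "- x" for x])

lemma additive_group_pow: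
  "x [^]\<^bsub>additive_group\<lparr>carrier := H\<rparr>\<^esub> k = nsmul k x"
  by (induction k) (simp_all add: additive_group_def add.commute)

lemma cauchy_nsmul:
  assumes "prime q" and "q dvd card (UNIV :: 'a set)"
  shows "\<exists>s::'a::{ab_group_add, finite}. s \<noteq> 0 \<and> nsmul q s = 0"
proof -
  let ?G = "additive_group :: 'a monoid"
  obtain m where "order ?G = q ^ 1 * m"
    using assms(2) by (auto simp: order_def additive_group_def)
  then obtain H where H: "subgroup H ?G" "card H = q"
    using sylow_thm[OF assms(1) group_additive_group] by fastforce
  have "\<not> H \<subseteq> {0}"
    using card_mono[of "{0}" H] H(2) prime_gt_1_nat[OF assms(1)] by auto
  then obtain h where h: "h \<in> H" "h \<noteq> 0"
    by blast
  have "group (?G\<lparr>carrier := H\<rparr>)"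
    using subgroup.subgroup_is_group[OF H(1) group_additive_group] .
  moreover have "h \<in> carrier (?G\<lparr>carrier := H\<rparr>)"
    using h(1) by simp
  ultimately have "h [^]\<^bsub>?G\<lparr>carrier := H\<rparr>\<^esub> order (?G\<lparr>carrier := H\<rparr>) = \<one>\<^bsub>?G\<lparr>carrier := H\<rparr>\<^esub>"
    by (rule group.pow_order_eq_1)
  then have "nsmul q h = 0"
    unfolding additive_group_pow using H(2) by (simp add: order_def additive_group_def)
  with h(2) show ?thesis
    by blast
qed

lemma prime_power_if_unique_prime_divisor:
  fixes N :: nat
  assumes "N \<noteq> 0" and unique: "\<And>p q. prime p \<Longrightarrow> prime q \<Longrightarrow> p dvd N \<Longrightarrow> q dvd N \<Longrightarrow> p = q"
  shows "\<exists>p k. prime p \<and> N = p ^ k"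
proof (cases "N = 1")
  case True
  then show ?thesis
    by (intro exI[of _ 2] exI[of _ 0]) simp
next
  case False
  then have "\<not> is_unit N"
    by simp
  then obtain p k m where p: "prime p" "p dvd N" "\<not> p dvd m" "N = p ^ k * m"
    using divide_out_primepow[OF assms(1)] by metis
  have "m = 1"
  proof (rule ccontr)
    assume "m \<noteq> 1"
    moreover have "m \<noteq> 0"
      using p(4) assms(1) by auto
    ultimately obtain q where "prime q" "q dvd m"
      using prime_factor_nat by blast
    then show False
      using unique[OF p(1) \<open>prime q\<close> p(2)] p(3,4) by auto
  qed
  with p show ?thesis
    by auto
qed

lemma additive_of_zero_sum_preserving:
  fixes f g h :: "'a::ab_group_add \<Rightarrow> 'b::ab_group_add"
  assumes "\<And>x y z. x + y + z = 0 \<Longrightarrow> f x + g y + h z = 0"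
  shows "additive (\<lambda>x. f x - f 0)"
proof
  fix a b
  have shift: "f a + g b = f (a + b) + g 0" for a b
    using assms[of a b "- (a + b)"] assms[of "a + b" 0 "- (a + b)"]
    by (simp add: eq_neg_iff_add_eq_0[symmetric])
  from shift[of 0 b] have "g b = f b - f 0 + g 0"
    by (simp add: algebra_simps)
  with shift[of a b] have "f (a + b) = f a + f b - f 0"
    by (simp add: algebra_simps)
  then show "f (a + b) - f 0 = (f a - f 0) + (f b - f 0)"
    by (simp add: algebra_simps)
qed

lemma additive_sum_vapply_first:
  fixes \<Psi> :: "('a::ab_group_add \<Rightarrow> 'a) list"
  assumes "n \<ge> 3" and "length \<Psi> = n" and pres: "vpreserves \<Psi> (zero_sum_tuples n)"
  shows "additive (\<lambda>s. sum_list (vapply \<Psi> (s # replicate (n - 1) 0)))"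
proof -
  have "Suc (Suc (Suc 0)) \<le> length \<Psi>"
    using assms(1,2) by simp
  then obtain f0 f1 f2 rest where \<Psi>: "\<Psi> = f0 # f1 # f2 # rest"
    by (auto simp: Suc_le_length_iff)
  have n: "n = Suc (Suc (Suc (n - 3)))" and rest: "length rest = n - 3"
    using assms(1,2) \<Psi> by auto
  define c where "c = sum_list (map (\<lambda>f. f 0) rest)"
  have map2_zeros: "map2 (\<lambda>f x. f x) fs (replicate (length fs) 0) = map (\<lambda>f. f 0) fs"
    for fs :: "('a \<Rightarrow> 'a) list"
    by (induction fs) auto
  have sum_image: "sum_list (vapply \<Psi> (x # y # z # replicate (n - 3) 0)) = f0 x + f1 y + (f2 z + c)"
    for x y z
    using map2_zeros[of rest] by (simp add: \<Psi> rest vapply_def c_def add.assoc)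
  have preserved: "f0 x + f1 y + (f2 z + c) = 0" if "x + y + z = 0" for x y z
  proof -
    have "x # y # z # replicate (n - 3) 0 \<in> zero_sum_tuples n"
      using that n[symmetric] by (simp add: add.assoc)
    with pres show ?thesis
      by (auto simp: vpreserves_def sum_image[symmetric])
  qed
  have "sum_list (vapply \<Psi> (s # replicate (n - 1) 0)) = f0 s - f0 0" for s
  proof -
    have "replicate (n - 1) (0::'a) = 0 # 0 # replicate (n - 3) 0"
      by (subst n) simp
    then show ?thesis
      using sum_image[of s 0 0] preserved[of 0 0 0] by (simp add: algebra_simps eq_neg_iff_add_eq_0)
  qed
  with additive_of_zero_sum_preserving[of f0 f1 "\<lambda>z. f2 z + c"] preserved show ?thesis
    by simp
qed

lemma key_tuple_sum_annihilated:
  fixes \<beta> :: "'a::ab_group_add list" and s :: 'a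
  assumes "n \<ge> 3"
    and key: "\<forall>\<alpha>\<in>tuples n - zero_sum_tuples n.
      \<exists>\<Psi>. length \<Psi> = n \<and> vpreserves \<Psi> (zero_sum_tuples n) \<and> vapply \<Psi> \<alpha> = \<beta>"
    and "s \<noteq> 0" and "nsmul q s = 0"
  shows "nsmul q (sum_list \<beta>) = 0"
proof -
  have "s # replicate (n - 1) 0 \<in> tuples n - zero_sum_tuples n"
    using assms(1,3) by (auto simp: tuples_def)
  with key obtain \<Psi> :: "('a \<Rightarrow> 'a) list"
    where \<Psi>: "length \<Psi> = n" "vpreserves \<Psi> (zero_sum_tuples n)"
    and \<beta>: "vapply \<Psi> (s # replicate (n - 1) 0) = \<beta>"
    by blast
  interpret additive "\<lambda>s. sum_list (vapply \<Psi> (s # replicate (n - 1) 0))"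
    using additive_sum_vapply_first[OF assms(1) \<Psi>] .
  show ?thesis
    using nsmul[of q s] zero assms(4) \<beta> by simp
qed

theorem mainTheorem16:
  fixes n :: nat
  assumes "n \<ge> 3"
    and "key_relation n {xs :: ('a::{ab_group_add, finite}) list. length xs = n \<and> sum_list xs = 0}"
  shows "\<exists>p k. prime (p::nat) \<and> card (UNIV :: 'a set) = p ^ k"
proof -
  from assms(2) obtain \<beta> :: "'a list" where \<beta>: "\<beta> \<in> tuples n - zero_sum_tuples n"
    and key: "\<forall>\<alpha>\<in>tuples n - zero_sum_tuples n.
      \<exists>\<Psi>. length \<Psi> = n \<and> vpreserves \<Psi> (zero_sum_tuples n) \<and> vapply \<Psi> \<alpha> = \<beta>"
    unfolding key_relation_def by blast
  have annihilated: "nsmul q (sum_list \<beta>) = 0" if "prime q" "q dvd card (UNIV :: 'a set)" for q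
    using cauchy_nsmul[OF that] key_tuple_sum_annihilated[OF assms(1) key] by blast
  have "p = q" if "prime p" "prime q" "p dvd card (UNIV :: 'a set)" "q dvd card (UNIV :: 'a set)" for p q
  proof (rule ccontr)
    assume "p \<noteq> q"
    then have "sum_list \<beta> = 0"
      using nsmul_coprime_eq_0 annihilated that primes_coprime by blast
    with \<beta> show False
      by (simp add: tuples_def)
  qed
  then show ?thesis
    by (intro prime_power_if_unique_prime_divisor) simp_all
qed

end
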